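(* Consider the Data Revocation Game with homogeneous dependent users: all users have the same parameters $\theta>0$, $\ell>0$, $\xi>0$, $d^{\max}>0$, and independence index $\epsilon_i=0$ for all $i$ (with the convention $\ln 0=-\infty$). Then: (1) If $d^{\max}>\frac{1}{I\xi\ell}$, the symmetric profile with, for all $i\in\mathcal I$, $$d_i^*=\frac{1}{2\theta\ell(I-1)}\Big(d^{\max}(\xi+\theta\ell(I-1))-\sqrt{(d^{\max})^2(\xi+\theta\ell(I-1))^2-4\theta(I-1)d^{\max}/I}\Big)$$ satisfies $d_i^*\in(0,d^{\max})$ and is a Nash equilibrium. (2) If $d^{\max}\le\frac{1}{I\xi\ell}$, the profile $d_i^*=d^{\max}$ for all $i\in\mathcal I$ is a Nash equilibrium.
   Context: Data Revocation Game: a finite set of users $\mathcal I=\{1,\dots,I\}$, $I\ge 2$. Each user $i$ has parameters $d_i^{\max}>0$, $\epsilon_i\ge 0$ (independence index), $\xi_i>0$ (marginal privacy cost), $\ell_i>0$ (data uniqueness level), $\theta_i\ge 0$ (marginal unlearning cost). Each user chooses $d_i\in[0,d_i^{\max}]$ (data kept). Payoff $$U_i(d_i,\boldsymbol{d_{-i}})=\ln\Big(\sum_{j\in\mathcal I}d_j+\epsilon_i\Big)-\xi_i d_i\ell_i-\theta_i d_i\sum_{j\neq i}\Big(1-\frac{d_j}{d_j^{\max}}\Big)\ell_j^2 .$$ A Nash equilibrium is a profile $(d_i^* )$ with $d_i^*\in[0,d_i^{\max}]$ and $U_i(d_i^*,\boldsymbol{d_{-i}^*})\ge U_i(d_i,\boldsymbol{d_{-i}^*})$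 for all $i$ and all $d_i\in[0,d_i^{\max}]$. *)

theory Defs
  imports Complex_Main "HOL-Library.Extended_Real"
begin

definition ln_ext :: "real \<Rightarrow> ereal" where
  "ln_ext x = (if x > 0 then ereal (ln x) else -\<infinity>)"

definition drg_payoff ::
  "nat \<Rightarrow> (nat \<Rightarrow> real) \<Rightarrow> (nat \<Rightarrow> real) \<Rightarrow> (nat \<Rightarrow> real) \<Rightarrow> (nat \<Rightarrow> real)
   \<Rightarrow> (nat \<Rightarrow> real) \<Rightarrow> nat \<Rightarrow> (nat \<Rightarrow> real) \<Rightarrow> ereal" where
  "drg_payoff I dmax eps xi ell theta i d =
     ln_ext ((\<Sum>j\<in>{1..I}. d j) + eps i)
     - ereal (xi i * d i * ell i
              + theta i * d i * (\<Sum>j\<in>{1..I} - {i}. (1 - d j / dmax j) * (ell j)\<^sup>2))"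

definition drg_nash ::
  "nat \<Rightarrow> (nat \<Rightarrow> real) \<Rightarrow> (nat \<Rightarrow> real) \<Rightarrow> (nat \<Rightarrow> real) \<Rightarrow> (nat \<Rightarrow> real)
   \<Rightarrow> (nat \<Rightarrow> real) \<Rightarrow> (nat \<Rightarrow> real) \<Rightarrow> bool" where
  "drg_nash I dmax eps xi ell theta d \<longleftrightarrow>
     (\<forall>i\<in>{1..I}. 0 \<le> d i \<and> d i \<le> dmax i) \<and>
     (\<forall>i\<in>{1..I}. \<forall>x. 0 \<le> x \<and> x \<le> dmax i \<longrightarrow>
        drg_payoff I dmax eps xi ell theta i (d(i := x))
          \<le> drg_payoff I dmax eps xi ell theta i d)"

end

theory Submission
  imports Defs
begin

text \<open>When every other user keeps \<open>D\<close>, user \<open>i\<close>'s payoff from keeping \<open>x\<close> is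
  \<open>ln (x + (I - 1) D) - c x\<close> with a constant unit cost \<open>c\<close>, a concave function of \<open>x\<close>.
  By the tangent-line bound for \<open>ln\<close>, \<open>x = D\<close> is a best response as soon as the
  marginal utility \<open>1 / (I D)\<close> minus \<open>c\<close> has the sign that makes every feasible deviation
  unprofitable: zero for an interior \<open>D\<close>, nonnegative for \<open>D = d\<^sup>m\<^sup>a\<^sup>x\<close>.
  The interior value is the smaller root of the quadratic into which \<open>1 / (I D) = c\<close>
  turns; it lies in \<open>(0, d\<^sup>m\<^sup>a\<^sup>x)\<close> because the quadratic is negative at \<open>d\<^sup>m\<^sup>a\<^sup>x\<close>
  exactly when \<open>d\<^sup>m\<^sup>a\<^sup>x > 1 / (I \<xi> \<ell>)\<close>.\<close>

lemma quadratic_lower_root: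
  fixes a b c m :: real
  assumes "a > 0" and neg: "a * m\<^sup>2 - b * m + c < 0"
  shows "a * ((b - sqrt (b\<^sup>2 - 4 * a * c)) / (2 * a))\<^sup>2
           - b * ((b - sqrt (b\<^sup>2 - 4 * a * c)) / (2 * a)) + c = 0"
    and "(b - sqrt (b\<^sup>2 - 4 * a * c)) / (2 * a) < m"
proof -
  define \<Delta> where "\<Delta> = b\<^sup>2 - 4 * a * c"
  define r where "r = (b - sqrt \<Delta>) / (2 * a)"
  have "(b - 2 * a * m)\<^sup>2 - \<Delta> = 4 * a * (a * m\<^sup>2 - b * m + c)"
    unfolding \<Delta>_def by (simp add: power2_eq_square algebra_simps)
  moreover have "4 * a * (a * m\<^sup>2 - b * m + c) < 0"
    using \<open>a > 0\<close> neg by (simp add: mult_pos_neg)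
  ultimately have below: "(b - 2 * a * m)\<^sup>2 < \<Delta>"
    by linarith
  then have "(sqrt \<Delta>)\<^sup>2 = \<Delta>"
    by (meson le_less_trans less_imp_le real_sqrt_pow2 zero_le_power2)
  moreover have "sqrt \<Delta> = b - 2 * a * r"
    using \<open>a > 0\<close> unfolding r_def by simp
  moreover have "4 * a * (a * r\<^sup>2 - b * r + c) = (b - 2 * a * r)\<^sup>2 - \<Delta>"
    unfolding \<Delta>_def by (simp add: power2_eq_square algebra_simps)
  ultimately have "4 * a * (a * r\<^sup>2 - b * r + c) = 0"
    by simp
  with \<open>a > 0\<close> show "a * ((b - sqrt (b\<^sup>2 - 4 * a * c)) / (2 * a))\<^sup>2
               - b * ((b - sqrt (b\<^sup>2 - 4 * a * c)) / (2 * a)) + c = 0"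
    unfolding r_def \<Delta>_def by simp
  have "\<bar>b - 2 * a * m\<bar> < sqrt \<Delta>"
    using real_less_rsqrt[of "\<bar>b - 2 * a * m\<bar>" \<Delta>] below by simp
  then have "2 * a * r < 2 * a * m"
    using \<open>a > 0\<close> unfolding r_def by simp
  then have "r < m"
    using \<open>a > 0\<close> by simp
  then show "(b - sqrt (b\<^sup>2 - 4 * a * c)) / (2 * a) < m"
    unfolding r_def \<Delta>_def .
qed

lemma quadratic_lower_root_pos:
  fixes a b c :: real
  assumes "a > 0" and "b > 0" and "c > 0"
  shows "0 < (b - sqrt (b\<^sup>2 - 4 * a * c)) / (2 * a)"
proof -
  have "sqrt (b\<^sup>2 - 4 * a * c) < sqrt (b\<^sup>2)"
    using assms by (intro real_sqrt_less_mono) simp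
  with assms show ?thesis by simp
qed

definition symmetric_unit_cost :: "nat \<Rightarrow> real \<Rightarrow> real \<Rightarrow> real \<Rightarrow> real \<Rightarrow> real \<Rightarrow> real" where
  "symmetric_unit_cost I dm xi l th D = xi * l + th * (real I - 1) * (1 - D / dm) * l\<^sup>2"

lemma drg_payoff_symmetric_deviation:
  fixes dm xi l th D x :: real
  assumes i: "i \<in> {1..I}" and pos: "x + (real I - 1) * D > 0"
  shows "drg_payoff I (\<lambda>_. dm) (\<lambda>_. 0) (\<lambda>_. xi) (\<lambda>_. l) (\<lambda>_. th) i ((\<lambda>_. D)(i := x))
         = ereal (ln (x + (real I - 1) * D) - symmetric_unit_cost I dm xi l th D * x)"
proof -
  have others: "real (card ({1..I} - {i})) = real I - 1"
    using i by (simp add: of_nat_diff)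
  have "(\<Sum>j\<in>{1..I}. ((\<lambda>_. D)(i := x)) j)
        = x + (\<Sum>j\<in>{1..I} - {i}. ((\<lambda>_. D)(i := x)) j)"
    using sum.remove[of "{1..I}" i "(\<lambda>_. D)(i := x)"] i by simp
  also have "(\<Sum>j\<in>{1..I} - {i}. ((\<lambda>_. D)(i := x)) j) = (\<Sum>j\<in>{1..I} - {i}. D)"
    by (rule sum.cong) auto
  also have "\<dots> = (real I - 1) * D"
    using others by simp
  finally have total: "(\<Sum>j\<in>{1..I}. ((\<lambda>_. D)(i := x)) j) = x + (real I - 1) * D" .
  have "(\<Sum>j\<in>{1..I} - {i}. (1 - ((\<lambda>_. D)(i := x)) j / dm) * l\<^sup>2)
        = (\<Sum>j\<in>{1..I} - {i}. (1 - D / dm) * l\<^sup>2)"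
    by (rule sum.cong) auto
  then have cost: "(\<Sum>j\<in>{1..I} - {i}. (1 - ((\<lambda>_. D)(i := x)) j / dm) * l\<^sup>2)
                   = (real I - 1) * ((1 - D / dm) * l\<^sup>2)"
    using others by simp
  \<comment> \<open>generalised over \<open>q\<close> so that \<open>algebra_simps\<close> cannot split \<open>1 - D / dm\<close>\<close>
  have "xi * x * l + th * x * ((real I - 1) * (q * l\<^sup>2))
        = (xi * l + th * (real I - 1) * q * l\<^sup>2) * x" for q
    by (simp add: algebra_simps)
  then have "xi * x * l + th * x * ((real I - 1) * ((1 - D / dm) * l\<^sup>2))
        = symmetric_unit_cost I dm xi l th D * x"
    unfolding symmetric_unit_cost_def .
  with pos show ?thesis
    unfolding drg_payoff_def total cost by (simp add: ln_ext_def)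
qed

lemma drg_nash_symmetricI:
  fixes dm xi l th D :: real
  assumes "I \<ge> 2" and "0 < D" and "D \<le> dm"
    and no_gain: "\<And>x. 0 \<le> x \<Longrightarrow> x \<le> dm \<Longrightarrow>
                   (1 / (real I * D) - symmetric_unit_cost I dm xi l th D) * (x - D) \<le> 0"
  shows "drg_nash I (\<lambda>_. dm) (\<lambda>_. 0) (\<lambda>_. xi) (\<lambda>_. l) (\<lambda>_. th) (\<lambda>_. D)"
  unfolding drg_nash_def
proof (intro conjI ballI allI impI)
  fix i x assume i: "i \<in> {1..I}" and x: "0 \<le> x \<and> x \<le> dm"
  define c where "c = symmetric_unit_cost I dm xi l th D"
  have others_pos: "(real I - 1) * D > 0"
    using \<open>I \<ge> 2\<close> \<open>0 < D\<close> by simp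
  have deviate: "x + (real I - 1) * D > 0"
    using x others_pos by (simp add: add_nonneg_pos)
  have stay: "D + (real I - 1) * D = real I * D" "real I * D > 0"
    using \<open>I \<ge> 2\<close> \<open>0 < D\<close> by (simp_all add: algebra_simps)
  have "ln (x + (real I - 1) * D) - ln (real I * D)
        \<le> (x + (real I - 1) * D - real I * D) / (real I * D)"
    using deviate stay by (intro ln_diff_le)
  also have "\<dots> = (x - D) / (real I * D)"
    by (simp add: algebra_simps)
  also have "\<dots> \<le> c * (x - D)"
    using no_gain[of x] x unfolding c_def by (simp add: algebra_simps)
  finally have "ln (x + (real I - 1) * D) - c * x \<le> ln (D + (real I - 1) * D) - c * D"
    unfolding stay by (simp add: algebra_simps)
  moreover have "(\<lambda>_. D)(i := D) = (\<lambda>_. D)"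
    by auto
  ultimately show "drg_payoff I (\<lambda>_. dm) (\<lambda>_. 0) (\<lambda>_. xi) (\<lambda>_. l) (\<lambda>_. th) i ((\<lambda>_. D)(i := x))
           \<le> drg_payoff I (\<lambda>_. dm) (\<lambda>_. 0) (\<lambda>_. xi) (\<lambda>_. l) (\<lambda>_. th) i (\<lambda>_. D)"
    using drg_payoff_symmetric_deviation[OF i deviate, of dm xi l th]
          drg_payoff_symmetric_deviation[OF i, of D D dm xi l th] stay
    unfolding c_def by simp
qed (use assms in auto)

lemma symmetric_unit_cost_at_quadratic_root:
  fixes dm xi l th D :: real
  assumes "I \<ge> 1" and "l > 0" and "dm > 0" and "D > 0"
    and root: "th * l * (real I - 1) * D\<^sup>2 - dm * (xi + th * l * (real I - 1)) * D
               + dm / (real I * l) = 0"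
  shows "symmetric_unit_cost I dm xi l th D = 1 / (real I * D)"
proof -
  define a where "a = th * l * (real I - 1)"
  have quad: "dm * (xi + a) * D - a * D\<^sup>2 = dm / (real I * l)"
    using root unfolding a_def by linarith
  have "symmetric_unit_cost I dm xi l th D * (real I * D)
          = real I * l / dm * (dm * (xi + a) * D - a * D\<^sup>2)"
    using \<open>dm > 0\<close> unfolding symmetric_unit_cost_def a_def
    by (simp add: field_simps power2_eq_square)
  also have "\<dots> = 1"
    unfolding quad using \<open>I \<ge> 1\<close> \<open>l > 0\<close> \<open>dm > 0\<close> by (simp add: field_simps)
  finally show ?thesis
    using \<open>I \<ge> 1\<close> \<open>D > 0\<close> by (simp add: eq_divide_eq)
qed

lemma drg_nash_interior_symmetric:
  fixes I :: nat and th l xi dm :: real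
  assumes "I \<ge> 2" and "th > 0" and "l > 0" and "xi > 0" and "dm > 1 / (real I * xi * l)"
  shows "let D = 1 / (2 * th * l * (real I - 1)) *
                 (dm * (xi + th * l * (real I - 1))
                  - sqrt (dm\<^sup>2 * (xi + th * l * (real I - 1))\<^sup>2
                          - 4 * th * (real I - 1) * dm / real I))
         in 0 < D \<and> D < dm \<and>
            drg_nash I (\<lambda>_. dm) (\<lambda>_. 0) (\<lambda>_. xi) (\<lambda>_. l) (\<lambda>_. th) (\<lambda>_. D)"
proof -
  define a where "a = th * l * (real I - 1)"
  have "a > 0" and "dm > 0"
    using assms unfolding a_def by (auto intro: less_trans[rotated])
  have "a * dm\<^sup>2 - dm * (xi + a) * dm + dm / (real I * l) < 0"
    using assms \<open>dm > 0\<close> by (simp add: field_simps power2_eq_square)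
  note root = quadratic_lower_root[OF \<open>a > 0\<close> this]
  define D where "D = (dm * (xi + a) - sqrt ((dm * (xi + a))\<^sup>2 - 4 * a * (dm / (real I * l)))) / (2 * a)"
  have "0 < D"
    unfolding D_def using \<open>a > 0\<close> \<open>dm > 0\<close> assms by (intro quadratic_lower_root_pos) auto
  moreover have "D < dm"
    using root(2) unfolding D_def .
  moreover have "symmetric_unit_cost I dm xi l th D = 1 / (real I * D)"
    using root(1) assms \<open>dm > 0\<close> \<open>0 < D\<close> unfolding D_def a_def
    by (intro symmetric_unit_cost_at_quadratic_root) (auto simp: power2_eq_square)
  ultimately have "0 < D \<and> D < dm \<and> drg_nash I (\<lambda>_. dm) (\<lambda>_. 0) (\<lambda>_. xi) (\<lambda>_. l) (\<lambda>_. th) (\<lambda>_. D)"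
    using assms by (auto intro: drg_nash_symmetricI)
  moreover have "4 * a * (dm / (real I * l)) = 4 * th * (real I - 1) * dm / real I"
    using assms unfolding a_def by (simp add: field_simps)
  ultimately show ?thesis
    unfolding D_def a_def Let_def by (simp add: power_mult_distrib mult.assoc)
qed

lemma drg_nash_full_retention:
  fixes I :: nat and th l xi dm :: real
  assumes "I \<ge> 2" and "dm > 0" and "dm \<le> 1 / (real I * xi * l)"
  shows "drg_nash I (\<lambda>_. dm) (\<lambda>_. 0) (\<lambda>_. xi) (\<lambda>_. l) (\<lambda>_. th) (\<lambda>_. dm)"
proof (rule drg_nash_symmetricI)
  have "real I * xi * l > 0"
    using assms by (metis divide_le_0_1_iff less_le_trans not_less)
  then have "xi * l \<le> 1 / (real I * dm)"
    using assms by (simp add: field_simps)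
  moreover have "symmetric_unit_cost I dm xi l th dm = xi * l"
    using assms by (simp add: symmetric_unit_cost_def)
  ultimately show "(1 / (real I * dm) - symmetric_unit_cost I dm xi l th dm) * (x - dm) \<le> 0"
    if "x \<le> dm" for x
    using that by (auto intro: mult_nonneg_nonpos)
qed (use assms in auto)

theorem proposition1:
  fixes I :: nat and th l xi dm :: real
  assumes "I \<ge> 2" and "th > 0" and "l > 0" and "xi > 0" and "dm > 0"
  shows "(dm > 1 / (real I * xi * l) \<longrightarrow>
           (let D = 1 / (2 * th * l * (real I - 1)) *
                    (dm * (xi + th * l * (real I - 1))
                     - sqrt (dm\<^sup>2 * (xi + th * l * (real I - 1))\<^sup>2
                             - 4 * th * (real I - 1) * dm / real I))
            in 0 < D \<and> D < dm \<and>
               drg_nash I (\<lambda>_. dm) (\<lambda>_. 0) (\<lambda>_. xi) (\<lambda>_. l) (\<lambda>_. th) (\<lambda>_. D)))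
       \<and> (dm \<le> 1 / (real I * xi * l) \<longrightarrow>
           drg_nash I (\<lambda>_. dm) (\<lambda>_. 0) (\<lambda>_. xi) (\<lambda>_. l) (\<lambda>_. th) (\<lambda>_. dm))"
  using drg_nash_interior_symmetric[of I th l xi dm] drg_nash_full_retention[of I dm xi l th]
    assms by blast

end
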